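(* Let $\langle A,\to\rangle$ be a conditional algebra. The correspondence $B\mapsto E_B$ is a dual lattice isomorphism between the lattice of domains of subalgebras of $\langle A,\to\rangle$ (Boolean subalgebras of $A$ closed under $\to$) and the lattice of C-equivalences of the expanded Stone space $\langle\mathrm{Ul}(A),\tau_s,T_A\rangle$.
   Context: A conditional algebra is $\langle A,\to\rangle$ with $A$ a Boolean algebra and $\to$ binary with $a\to1=1$, $(a\to b)\wedge(a\to c)=a\to(b\wedge c)$, $(a\vee b)\to c\le(a\to c)\wedge(b\to c)$. $\mathrm{Ul}(A)$ is the Stone space of ultrafilters; closed sets are the sets $\varphi(F)=\{u:F\subseteq u\}$ for filters $F$ (the improper filter $A$ included). $D^{\to}_u(F)=\{b:\exists a\in F,\ a\to b\in u\}$; $T_A(u,Z,v)$ iff there is a filter $F$ with $Z=\varphi(F)$ and $D^{\to}_u(F)\subseteq v$. $E_B=\{(u,v): u\cap B=v\cap B\}$. For an equivalence $E$ and closed $Y,C$: $Y\preceq_E C$ iff every $y\in Y$ is $E$-related to some $x\in C$. $E$ is a C-equivalence if it is a Boolean equivalence (for each $(x,y)\notin E$ there is a clopen $E$-closed set containing $x$ but not $y$) and whenever $E(x,y)$ and $T_A(x,Y,x')$ with $Y$ closed, there are $y'$ with $E(x',y')$ and closed $C$ with $T_A(y,C,y')$ and $C\preceq_E Y$. *)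

theory Defs
  imports "HOL-Analysis.Analysis"
begin

definition conditional_algebra :: "('a::boolean_algebra \<Rightarrow> 'a \<Rightarrow> 'a) \<Rightarrow> bool" where
  "conditional_algebra imp \<longleftrightarrow>
     (\<forall>a. imp a top = top) \<and>
     (\<forall>a b c. inf (imp a b) (imp a c) = imp a (inf b c)) \<and>
     (\<forall>a b c. imp (sup a b) c \<le> inf (imp a c) (imp b c))"

definition subalgebra_dom :: "('a::boolean_algebra \<Rightarrow> 'a \<Rightarrow> 'a) \<Rightarrow> 'a set \<Rightarrow> bool" where
  "subalgebra_dom imp B \<longleftrightarrow>
     top \<in> B \<and> bot \<in> B \<and>
     (\<forall>a\<in>B. \<forall>b\<in>B. sup a b \<in> B) \<and>
     (\<forall>a\<in>B. \<forall>b\<in>B. inf a b \<in> B) \<and>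
     (\<forall>a\<in>B. - a \<in> B) \<and>
     (\<forall>a\<in>B. \<forall>b\<in>B. imp a b \<in> B)"

text \<open>Filters of a Boolean algebra (the improper filter UNIV included).\<close>
definition bfilter :: "'a::boolean_algebra set \<Rightarrow> bool" where
  "bfilter F \<longleftrightarrow> top \<in> F \<and> (\<forall>a\<in>F. \<forall>b. a \<le> b \<longrightarrow> b \<in> F) \<and>
                  (\<forall>a\<in>F. \<forall>b\<in>F. inf a b \<in> F)"

definition ultrafilter :: "'a::boolean_algebra set \<Rightarrow> bool" where
  "ultrafilter u \<longleftrightarrow> bfilter u \<and> bot \<notin> u \<and> (\<forall>a. a \<in> u \<or> - a \<in> u)"

definition Ul :: "'a::boolean_algebra set set" where
  "Ul = {u. ultrafilter u}"

definition stone_top :: "'a::boolean_algebra set topology" where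
  "stone_top = topology_generated_by {{u \<in> Ul. a \<in> u} | a. True}"

definition phi :: "'a::boolean_algebra set \<Rightarrow> 'a set set" where
  "phi F = {u \<in> Ul. F \<subseteq> u}"

definition Dimp :: "('a \<Rightarrow> 'a \<Rightarrow> 'a) \<Rightarrow> 'a set \<Rightarrow> 'a set \<Rightarrow> 'a set" where
  "Dimp imp u F = {b. \<exists>a\<in>F. imp a b \<in> u}"

definition TA :: "('a::boolean_algebra \<Rightarrow> 'a \<Rightarrow> 'a) \<Rightarrow> 'a set \<Rightarrow> 'a set set \<Rightarrow> 'a set \<Rightarrow> bool" where
  "TA imp u Z v \<longleftrightarrow> u \<in> Ul \<and> v \<in> Ul \<and>
     (\<exists>F. bfilter F \<and> Z = phi F \<and> Dimp imp u F \<subseteq> v)"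

definition EB :: "'a::boolean_algebra set \<Rightarrow> ('a set \<times> 'a set) set" where
  "EB B = {(u, v). u \<in> Ul \<and> v \<in> Ul \<and> u \<inter> B = v \<inter> B}"

definition E_closed :: "('b \<times> 'b) set \<Rightarrow> 'b set \<Rightarrow> bool" where
  "E_closed E S \<longleftrightarrow> (\<forall>x y. (x, y) \<in> E \<longrightarrow> x \<in> S \<longrightarrow> y \<in> S)"

definition E_preceq :: "('b \<times> 'b) set \<Rightarrow> 'b set \<Rightarrow> 'b set \<Rightarrow> bool" where
  "E_preceq E Y C \<longleftrightarrow> (\<forall>y\<in>Y. \<exists>x\<in>C. (y, x) \<in> E)"

definition boolean_equivalence :: "('a::boolean_algebra set \<times> 'a set) set \<Rightarrow> bool" where
  "boolean_equivalence E \<longleftrightarrow> equiv Ul E \<and>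
     (\<forall>x\<in>Ul. \<forall>y\<in>Ul. (x, y) \<notin> E \<longrightarrow>
        (\<exists>S. openin stone_top S \<and> closedin stone_top S \<and> E_closed E S \<and> x \<in> S \<and> y \<notin> S))"

definition C_equivalence :: "('a::boolean_algebra \<Rightarrow> 'a \<Rightarrow> 'a) \<Rightarrow> ('a set \<times> 'a set) set \<Rightarrow> bool" where
  "C_equivalence imp E \<longleftrightarrow> boolean_equivalence E \<and>
     (\<forall>x y x' Y. (x, y) \<in> E \<longrightarrow> closedin stone_top Y \<longrightarrow> TA imp x Y x' \<longrightarrow>
        (\<exists>y' C. (x', y') \<in> E \<and> closedin stone_top C \<and> TA imp y C y' \<and> E_preceq E C Y))"

end

theory Submission
  imports Defs
begin

(* For a subalgebra B, the elements of B are recovered from E_B: an element outside B is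
   separated by two ultrafilters with the same trace on B. For a C-equivalence E, the elements a
   whose basic clopen set {u. a \<in> u} is E-saturated form a subalgebra B_E with E_{B_E} = E,
   because the clopen sets of the Stone space are exactly the basic ones and a Boolean equivalence
   is determined by its saturated clopen sets. The back-and-forth condition for E_B is witnessed by
   the closed set of the filter generated by the trace F \<inter> B of the given filter F; conversely,
   the back-and-forth condition of E at the principal closed set {u. a \<in> u} shows that B_E is
   closed under the conditional. *)

section \<open>Filters and ultrafilters\<close>

definition inf_closed :: "'a::semilattice_inf set \<Rightarrow> bool" where
  "inf_closed S \<longleftrightarrow> (\<forall>x\<in>S. \<forall>y\<in>S. inf x y \<in> S)"

definition upclosure :: "'a::order set \<Rightarrow> 'a set" where
  "upclosure S = {x. \<exists>s\<in>S. s \<le> x}"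

lemma bfilter_top: "bfilter F \<Longrightarrow> top \<in> F"
  unfolding bfilter_def by blast

lemma bfilter_upclosed: "bfilter F \<Longrightarrow> a \<in> F \<Longrightarrow> a \<le> b \<Longrightarrow> b \<in> F"
  unfolding bfilter_def by blast

lemma bfilter_inf_closed: "bfilter F \<Longrightarrow> inf_closed F"
  unfolding bfilter_def inf_closed_def by blast

lemma subset_upclosure: "S \<subseteq> upclosure S"
  unfolding upclosure_def by blast

lemma bfilter_upclosure:
  assumes "S \<noteq> {}" "inf_closed S"
  shows "bfilter (upclosure S)"
proof -
  have "inf x y \<in> upclosure S" if x: "x \<in> upclosure S" and y: "y \<in> upclosure S" for x y
  proof -
    obtain s t where "s \<in> S" "s \<le> x" "t \<in> S" "t \<le> y"
      using x y unfolding upclosure_def by blast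
    then have "inf s t \<in> S" "inf s t \<le> inf x y"
      using assms(2) unfolding inf_closed_def by (auto intro: le_infI1 le_infI2)
    then show ?thesis unfolding upclosure_def by blast
  qed
  then show ?thesis
    using assms(1) unfolding bfilter_def upclosure_def by (auto intro: order_trans)
qed

lemma bfilter_Union_chain:
  assumes "\<C> \<noteq> {}" and filters: "\<And>X. X \<in> \<C> \<Longrightarrow> bfilter X"
    and chain: "\<And>X Y. X \<in> \<C> \<Longrightarrow> Y \<in> \<C> \<Longrightarrow> X \<subseteq> Y \<or> Y \<subseteq> X"
  shows "bfilter (\<Union>\<C>)"
proof -
  have "inf a b \<in> \<Union>\<C>" if "a \<in> X" "X \<in> \<C>" "b \<in> Y" "Y \<in> \<C>" for a b X Y
  proof -
    have "X \<union> Y \<in> \<C>"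
      using chain[OF that(2,4)] that(2,4) by (metis Un_absorb1 Un_absorb2)
    then have "inf a b \<in> X \<union> Y"
      using filters[of "X \<union> Y"] that(1,3) unfolding bfilter_def by blast
    then show ?thesis using \<open>X \<union> Y \<in> \<C>\<close> by blast
  qed
  moreover have "top \<in> \<Union>\<C>"
    using assms(1) filters bfilter_top by blast
  moreover have "b \<in> \<Union>\<C>" if "a \<in> \<Union>\<C>" "a \<le> b" for a b
    using that filters bfilter_upclosed by blast
  ultimately show ?thesis
    unfolding bfilter_def by blast
qed

lemma Ul_bfilter: "u \<in> Ul \<Longrightarrow> bfilter u"
  unfolding Ul_def ultrafilter_def by blast

lemma Ul_top: "u \<in> Ul \<Longrightarrow> top \<in> u"
  using Ul_bfilter bfilter_top by blast

lemma Ul_bot: "u \<in> Ul \<Longrightarrow> bot \<notin> u"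
  unfolding Ul_def ultrafilter_def by blast

lemma Ul_upclosed: "u \<in> Ul \<Longrightarrow> a \<in> u \<Longrightarrow> a \<le> b \<Longrightarrow> b \<in> u"
  using Ul_bfilter bfilter_upclosed by blast

lemma Ul_inf_iff: "u \<in> Ul \<Longrightarrow> inf a b \<in> u \<longleftrightarrow> a \<in> u \<and> b \<in> u"
  using Ul_bfilter unfolding bfilter_def by (meson inf_le1 inf_le2)

lemma Ul_compl_iff: "u \<in> Ul \<Longrightarrow> - a \<in> u \<longleftrightarrow> a \<notin> u"
  using Ul_inf_iff[of u a "- a"] Ul_bot unfolding Ul_def ultrafilter_def by auto

lemma Ul_sup_iff: "u \<in> Ul \<Longrightarrow> sup a b \<in> u \<longleftrightarrow> a \<in> u \<or> b \<in> u"
  using Ul_compl_iff Ul_inf_iff[of u "- a" "- b"] by (metis compl_sup)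

lemma maximal_proper_filter_in_Ul:
  assumes M: "bfilter M" "bot \<notin> M"
    and maximal: "\<And>G. bfilter G \<Longrightarrow> bot \<notin> G \<Longrightarrow> M \<subseteq> G \<Longrightarrow> G = M"
  shows "M \<in> Ul"
  unfolding Ul_def ultrafilter_def
proof (intro CollectI conjI allI M)
  fix a
  show "a \<in> M \<or> - a \<in> M"
  proof (rule ccontr)
    assume neither: "\<not> (a \<in> M \<or> - a \<in> M)"
    define G where "G = upclosure ((\<lambda>f. inf f a) ` M)"
    have "inf (inf f a) (inf g a) = inf (inf f g) a" for f g
      by (simp add: inf_aci)
    then have "inf_closed ((\<lambda>f. inf f a) ` M)"
      using bfilter_inf_closed[OF M(1)] unfolding inf_closed_def by auto
    then have "bfilter G"
      unfolding G_def using bfilter_top[OF M(1)] by (intro bfilter_upclosure) auto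
    moreover have "bot \<notin> G"
    proof
      assume "bot \<in> G"
      then obtain f where "f \<in> M" "f \<le> - a"
        unfolding G_def upclosure_def by (auto simp: bot_unique inf_shunt)
      then show False using neither bfilter_upclosed[OF M(1)] by blast
    qed
    moreover have "M \<subseteq> G"
      unfolding G_def upclosure_def using inf_le1 by blast
    ultimately have "G = M" by (rule maximal)
    moreover have "a \<in> G"
      unfolding G_def upclosure_def using bfilter_top[OF M(1)] by force
    ultimately show False using neither by blast
  qed
qed

lemma exists_Ul_superset_filter:
  assumes "bfilter F" "bot \<notin> F"
  shows "\<exists>u\<in>Ul. F \<subseteq> u"
proof -
  let ?\<F> = "{G. bfilter G \<and> bot \<notin> G \<and> F \<subseteq> G}"
  have "\<exists>M\<in>?\<F>. \<forall>G\<in>?\<F>. M \<subseteq> G \<longrightarrow> G = M"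
  proof (rule subset_Zorn_nonempty)
    show "?\<F> \<noteq> {}" using assms by blast
  next
    fix \<C> assume "\<C> \<noteq> {}" "subset.chain ?\<F> \<C>"
    then have "bfilter (\<Union>\<C>)" "\<C> \<subseteq> ?\<F>"
      unfolding subset_chain_def by (auto intro!: bfilter_Union_chain)
    then show "\<Union>\<C> \<in> ?\<F>"
      using \<open>\<C> \<noteq> {}\<close> by blast
  qed
  then obtain M where M: "M \<in> ?\<F>" and maximal: "\<forall>G\<in>?\<F>. M \<subseteq> G \<longrightarrow> G = M"
    by blast
  have "M \<in> Ul"
  proof (rule maximal_proper_filter_in_Ul)
    show "G = M" if "bfilter G" "bot \<notin> G" "M \<subseteq> G" for G
      using that M maximal by blast
  qed (use M in blast)+
  then show ?thesis using M by blast
qed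

lemma exists_Ul_superset:
  assumes "S \<noteq> {}" "inf_closed S" "bot \<notin> S"
  shows "\<exists>u\<in>Ul. S \<subseteq> u"
proof -
  have "bot \<notin> upclosure S"
    using assms(3) unfolding upclosure_def by (auto simp: bot_unique)
  then obtain u where "u \<in> Ul" "upclosure S \<subseteq> u"
    using exists_Ul_superset_filter bfilter_upclosure[OF assms(1,2)] by blast
  then show ?thesis using subset_upclosure by blast
qed

lemma exists_Ul_superset_both:
  assumes S: "S \<noteq> {}" "inf_closed S" and T: "T \<noteq> {}" "inf_closed T"
    and meets: "\<And>s t. s \<in> S \<Longrightarrow> t \<in> T \<Longrightarrow> inf s t \<noteq> bot"
  shows "\<exists>u\<in>Ul. S \<subseteq> u \<and> T \<subseteq> u"
proof -
  let ?R = "{inf s t | s t. s \<in> S \<and> t \<in> T}"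
  have "inf x y \<in> ?R" if xy: "x \<in> ?R" "y \<in> ?R" for x y
  proof -
    obtain s t s' t' where st: "x = inf s t" "y = inf s' t'" "s \<in> S" "t \<in> T" "s' \<in> S" "t' \<in> T"
      using xy by blast
    then have "inf s s' \<in> S" "inf t t' \<in> T"
      using S(2) T(2) unfolding inf_closed_def by blast+
    moreover have "inf x y = inf (inf s s') (inf t t')"
      unfolding st(1,2) by (simp add: inf_aci)
    ultimately show ?thesis by blast
  qed
  moreover obtain s0 t0 where "s0 \<in> S" "t0 \<in> T"
    using S(1) T(1) by blast
  moreover have "bot \<notin> ?R"
    using meets by fastforce
  ultimately obtain u where u: "u \<in> Ul" "?R \<subseteq> u"
    using exists_Ul_superset[of ?R] unfolding inf_closed_def by blast
  have "s \<in> u" if "s \<in> S" for s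
    using u that \<open>t0 \<in> T\<close> Ul_inf_iff[OF u(1), of s t0] by blast
  moreover have "t \<in> u" if "t \<in> T" for t
    using u that \<open>s0 \<in> S\<close> Ul_inf_iff[OF u(1), of s0 t] by blast
  ultimately show ?thesis using u(1) by blast
qed

lemma exists_Ul_superset_not_mem:
  assumes F: "bfilter F" and "a \<notin> F"
  shows "\<exists>u\<in>Ul. F \<subseteq> u \<and> a \<notin> u"
proof -
  have meets: "inf s t \<noteq> bot" if "s \<in> F" "t \<in> {- a}" for s t
  proof
    assume "inf s t = bot"
    then have "s \<le> a" using that(2) by (simp add: inf_shunt)
    then show False using bfilter_upclosed[OF F that(1)] \<open>a \<notin> F\<close> by blast
  qed
  have "F \<noteq> {}" using bfilter_top[OF F] by blast
  moreover have "inf_closed {- a}" by (simp add: inf_closed_def)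
  ultimately obtain u where "u \<in> Ul" "F \<subseteq> u" "- a \<in> u"
    using exists_Ul_superset_both[OF _ bfilter_inf_closed[OF F] _ _ meets] by blast
  then show ?thesis using Ul_compl_iff by blast
qed

definition boolean_subalgebra :: "'a::boolean_algebra set \<Rightarrow> bool" where
  "boolean_subalgebra B \<longleftrightarrow> top \<in> B \<and> inf_closed B \<and> (\<forall>a\<in>B. - a \<in> B)"

lemma boolean_subalgebra_subalgebra_dom: "subalgebra_dom imp B \<Longrightarrow> boolean_subalgebra B"
  unfolding subalgebra_dom_def boolean_subalgebra_def inf_closed_def by blast

lemma exists_Ul_superset_same_trace:
  assumes B: "boolean_subalgebra B" and v: "v \<in> Ul"
    and S: "S \<noteq> {}" "inf_closed S"
    and above: "\<And>s b. s \<in> S \<Longrightarrow> b \<in> B \<Longrightarrow> s \<le> b \<Longrightarrow> b \<in> v"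
  shows "\<exists>w\<in>Ul. S \<subseteq> w \<and> w \<inter> B = v \<inter> B"
proof -
  have compl: "- b \<in> B" if "b \<in> B" for b
    using B that unfolding boolean_subalgebra_def by blast
  have meets: "inf s t \<noteq> bot" if "s \<in> S" "t \<in> v \<inter> B" for s t
  proof
    assume "inf s t = bot"
    then have "- t \<in> v" using above[of s "- t"] that compl by (simp add: inf_shunt)
    then show False using that Ul_compl_iff[OF v] by blast
  qed
  have "v \<inter> B \<noteq> {}" "inf_closed (v \<inter> B)"
    using B Ul_top[OF v] Ul_inf_iff[OF v] unfolding boolean_subalgebra_def inf_closed_def by auto
  then obtain w where w: "w \<in> Ul" "S \<subseteq> w" "v \<inter> B \<subseteq> w"
    using exists_Ul_superset_both[OF S _ _ meets] by blast
  have "b \<in> v" if "b \<in> w" "b \<in> B" for b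
    using Ul_compl_iff[OF v, of b] Ul_compl_iff[OF w(1), of b] w(3) that compl[OF that(2)] by blast
  then show ?thesis using w by blast
qed

lemma exists_Ul_same_trace_separating:
  assumes B: "boolean_subalgebra B" and "a \<notin> B"
  shows "\<exists>u\<in>Ul. \<exists>v\<in>Ul. u \<inter> B = v \<inter> B \<and> a \<in> u \<and> a \<notin> v"
proof -
  let ?P = "{b \<in> B. a \<le> b}"
  have "a \<notin> upclosure ?P"
    using assms(2) unfolding upclosure_def by (auto dest: antisym)
  moreover have "bfilter (upclosure ?P)"
    using B by (intro bfilter_upclosure) (auto simp: boolean_subalgebra_def inf_closed_def)
  ultimately obtain v where v: "v \<in> Ul" "upclosure ?P \<subseteq> v" "a \<notin> v"
    using exists_Ul_superset_not_mem by blast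
  have "\<exists>u\<in>Ul. {a} \<subseteq> u \<and> u \<inter> B = v \<inter> B"
    using v(2) subset_upclosure[of ?P]
    by (intro exists_Ul_superset_same_trace[OF B v(1)]) (auto simp: inf_closed_def)
  then show ?thesis using v by blast
qed

lemma EB_subset_iff:
  assumes "boolean_subalgebra B2"
  shows "EB B2 \<subseteq> EB B1 \<longleftrightarrow> B1 \<subseteq> B2"
proof
  assume EB_le: "EB B2 \<subseteq> EB B1"
  show "B1 \<subseteq> B2"
  proof (rule ccontr)
    assume "\<not> B1 \<subseteq> B2"
    then obtain a where "a \<in> B1" "a \<notin> B2" by blast
    moreover obtain u v where "u \<in> Ul" "v \<in> Ul" "u \<inter> B2 = v \<inter> B2" "a \<in> u" "a \<notin> v"
      using exists_Ul_same_trace_separating[OF assms \<open>a \<notin> B2\<close>] by blast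
    ultimately show False using EB_le unfolding EB_def by blast
  qed
qed (auto simp: EB_def)

section \<open>The Stone space\<close>

definition basic :: "'a::boolean_algebra \<Rightarrow> 'a set set" where
  "basic a = {u \<in> Ul. a \<in> u}"

lemma basic_inf: "basic (inf a b) = basic a \<inter> basic b"
  unfolding basic_def by (auto simp: Ul_inf_iff)

lemma basic_sup: "basic (sup a b) = basic a \<union> basic b"
  unfolding basic_def by (auto simp: Ul_sup_iff)

lemma basic_compl: "Ul - basic a = basic (- a)"
  unfolding basic_def by (auto simp: Ul_compl_iff)

lemma basic_top: "basic top = Ul"
  unfolding basic_def using Ul_top by blast

lemma basic_bot: "basic bot = {}"
  unfolding basic_def using Ul_bot by blast

lemma topspace_stone_top: "topspace stone_top = Ul"
proof -
  have "u \<in> {v \<in> Ul. top \<in> v}" if "u \<in> Ul" for u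
    using that Ul_top by blast
  then show ?thesis
    unfolding stone_top_def topology_generated_by_topspace by blast
qed

lemma openin_basic: "openin stone_top (basic a)"
  unfolding stone_top_def basic_def by (rule topology_generated_by_Basis) blast

lemma closedin_basic: "closedin stone_top (basic a)"
  unfolding closedin_def topspace_stone_top basic_compl
  using openin_basic by (simp add: basic_def)

lemma closedin_phi: "closedin stone_top (phi G)"
proof -
  have "Ul - phi G = (\<Union>g\<in>G. basic (- g))"
    unfolding phi_def basic_def by (auto simp: Ul_compl_iff)
  then show ?thesis
    unfolding closedin_def topspace_stone_top phi_def using openin_basic by auto
qed

lemma phi_upclosure_singleton: "phi (upclosure {a}) = basic a"
  unfolding phi_def basic_def upclosure_def using Ul_upclosed by blast

lemma mem_if_phi_subset_basic:
  assumes "bfilter G" "phi G \<subseteq> basic a"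
  shows "a \<in> G"
proof (rule ccontr)
  assume "a \<notin> G"
  then obtain u where "u \<in> Ul" "G \<subseteq> u" "a \<notin> u"
    using exists_Ul_superset_not_mem[OF assms(1)] by blast
  then show False
    using assms(2) unfolding phi_def basic_def by blast
qed

lemma openin_stone_topD:
  assumes "openin stone_top S"
  shows "S \<subseteq> Ul \<and> (\<forall>u\<in>S. \<exists>a\<in>u. basic a \<subseteq> S)"
  using openin_topology_generated_by[OF assms[unfolded stone_top_def]]
proof (induction rule: generate_topology_on.induct)
  case (Int S T)
  have S: "S \<subseteq> Ul" "\<And>u. u \<in> S \<Longrightarrow> \<exists>a\<in>u. basic a \<subseteq> S"
    and T: "\<And>u. u \<in> T \<Longrightarrow> \<exists>b\<in>u. basic b \<subseteq> T"
    using Int.IH by auto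
  have "\<exists>c\<in>u. basic c \<subseteq> S \<inter> T" if u: "u \<in> S \<inter> T" for u
  proof -
    obtain a b where "a \<in> u" "basic a \<subseteq> S" "b \<in> u" "basic b \<subseteq> T"
      using S(2) T u by (meson IntD1 IntD2)
    moreover have "u \<in> Ul" using S(1) u by blast
    ultimately have "inf a b \<in> u" "basic (inf a b) \<subseteq> S \<inter> T"
      by (auto simp: Ul_inf_iff basic_inf)
    then show ?thesis by blast
  qed
  then show ?case using S(1) by blast
next
  case (UN K)
  have "\<exists>a\<in>u. basic a \<subseteq> \<Union>K" if u: "u \<in> k" and k: "k \<in> K" for u k
  proof -
    obtain a where "a \<in> u" "basic a \<subseteq> k"
      using UN.IH[OF k] u by blast
    then show ?thesis using k by blast
  qed
  then show ?case using UN.IH by blast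
next
  case (Basis S)
  then obtain a where S: "S = basic a"
    unfolding basic_def by blast
  have "\<exists>c\<in>u. basic c \<subseteq> basic a" if "u \<in> basic a" for u
    using that unfolding basic_def by blast
  then show ?case
    unfolding S basic_def by blast
qed simp

text \<open>Compactness of the Stone space, in the form needed for clopen sets.\<close>
lemma top_mem_sup_closed_cover:
  assumes "I \<noteq> {}" and sup_closed: "\<And>a b. a \<in> I \<Longrightarrow> b \<in> I \<Longrightarrow> sup a b \<in> I"
    and cover: "\<And>u. u \<in> Ul \<Longrightarrow> \<exists>a\<in>I. a \<in> u"
  shows "top \<in> I"
proof (rule ccontr)
  assume "top \<notin> I"
  let ?J = "uminus ` I"
  have "bot \<notin> ?J"
  proof
    assume "bot \<in> ?J"
    then obtain a where "a \<in> I" "- a = - top" by auto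
    then show False
      using \<open>top \<notin> I\<close> compl_eq_compl_iff[of a top] by simp
  qed
  moreover have "inf_closed ?J"
    unfolding inf_closed_def
  proof (intro ballI)
    fix x y assume "x \<in> ?J" "y \<in> ?J"
    then obtain a b where "a \<in> I" "b \<in> I" "x = - a" "y = - b"
      by blast
    then have "inf x y = - sup a b" "sup a b \<in> I"
      using sup_closed by auto
    then show "inf x y \<in> ?J" by (metis imageI)
  qed
  moreover have "?J \<noteq> {}"
    using assms(1) by blast
  ultimately obtain u where u: "u \<in> Ul" "?J \<subseteq> u"
    using exists_Ul_superset[of ?J] by blast
  obtain a where "a \<in> I" "a \<in> u"
    using cover[OF u(1)] by blast
  moreover have "- a \<in> u"
    using u(2) \<open>a \<in> I\<close> by blast
  ultimately show False
    using Ul_compl_iff[OF u(1), of a] by blast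
qed

lemma basic_cover_of_open_cover:
  assumes "openin stone_top S" "openin stone_top T" "Ul \<subseteq> S \<union> T"
  shows "\<exists>a b. basic a \<subseteq> S \<and> basic b \<subseteq> T \<and> top = sup a b"
proof -
  have S: "\<And>u. u \<in> S \<Longrightarrow> \<exists>a\<in>u. basic a \<subseteq> S"
    and T: "\<And>u. u \<in> T \<Longrightarrow> \<exists>b\<in>u. basic b \<subseteq> T"
    using openin_stone_topD assms(1,2) by blast+
  define I where "I = {sup a b | a b. basic a \<subseteq> S \<and> basic b \<subseteq> T}"
  have I_intro: "sup a b \<in> I" if "basic a \<subseteq> S" "basic b \<subseteq> T" for a b
    unfolding I_def using that by blast
  have "top \<in> I"
  proof (rule top_mem_sup_closed_cover)
    show "I \<noteq> {}"
      using I_intro[of bot bot] basic_bot by blast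
  next
    fix x y assume "x \<in> I" "y \<in> I"
    then obtain a b a' b' where ab: "x = sup a b" "y = sup a' b'"
      "basic a \<subseteq> S" "basic b \<subseteq> T" "basic a' \<subseteq> S" "basic b' \<subseteq> T"
      unfolding I_def by blast
    have "sup x y = sup (sup a a') (sup b b')"
      unfolding ab(1,2) by (simp add: sup_aci)
    also have "\<dots> \<in> I"
      using ab(3-6) by (intro I_intro) (simp_all add: basic_sup)
    finally show "sup x y \<in> I" .
  next
    fix u :: "'a set" assume u: "u \<in> Ul"
    show "\<exists>x\<in>I. x \<in> u"
    proof (cases "u \<in> S")
      case True
      then obtain a where "a \<in> u" "basic a \<subseteq> S" using S by blast
      then have "sup a bot \<in> I" "sup a bot \<in> u"
        using I_intro[of a bot] Ul_sup_iff[OF u] by (simp_all add: basic_bot)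
      then show ?thesis by blast
    next
      case False
      then obtain b where "b \<in> u" "basic b \<subseteq> T" using T u assms(3) by blast
      then have "sup bot b \<in> I" "sup bot b \<in> u"
        using I_intro[of bot b] Ul_sup_iff[OF u] by (simp_all add: basic_bot)
      then show ?thesis by blast
    qed
  qed
  then show ?thesis
    unfolding I_def by blast
qed

lemma clopen_eq_basic:
  assumes "openin stone_top S" "closedin stone_top S"
  shows "\<exists>a. S = basic a"
proof -
  have "openin stone_top (Ul - S)"
    using assms(2) unfolding closedin_def topspace_stone_top by auto
  then obtain a b where ab: "basic a \<subseteq> S" "basic b \<subseteq> Ul - S" "top = sup a b"
    using basic_cover_of_open_cover[OF assms(1)] by blast
  have "basic a \<union> basic b = basic top"
    using basic_sup[of a b] by (simp add: ab(3))
  then have cover: "basic a \<union> basic b = Ul"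
    by (simp add: basic_top)
  have "S \<subseteq> Ul"
    using openin_subset[OF assms(1)] unfolding topspace_stone_top .
  then have "S \<subseteq> basic a"
    using cover ab(2) by blast
  then have "S = basic a"
    using ab(1) by (rule subset_antisym)
  then show ?thesis by blast
qed

section \<open>Subalgebras yield C-equivalences\<close>

lemma boolean_equivalence_EB: "boolean_equivalence (EB B)"
  unfolding boolean_equivalence_def
proof (intro conjI ballI impI)
  show "equiv Ul (EB B)"
    by (rule equivI) (auto simp: EB_def refl_on_def sym_def trans_def)
next
  fix x y assume x: "x \<in> Ul" and y: "y \<in> Ul" and "(x, y) \<notin> EB B"
  then have "x \<inter> B \<noteq> y \<inter> B"
    unfolding EB_def by auto
  then obtain b where b: "b \<in> B" "\<not> (b \<in> x \<longleftrightarrow> b \<in> y)"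
    by blast
  define c where "c = (if b \<in> x then b else - b)"
  have "E_closed (EB B) (basic c)"
    unfolding E_closed_def
  proof (intro allI impI)
    fix u v assume "(u, v) \<in> EB B" and "u \<in> basic c"
    then have "u \<in> Ul" "v \<in> Ul" "b \<in> u \<longleftrightarrow> b \<in> v"
      using b(1) unfolding EB_def by auto
    then show "v \<in> basic c"
      using \<open>u \<in> basic c\<close> unfolding basic_def c_def by (auto simp: Ul_compl_iff)
  qed
  moreover have "x \<in> basic c" "y \<notin> basic c"
    using b(2) x y unfolding basic_def c_def by (auto simp: Ul_compl_iff)
  ultimately show "\<exists>S. openin stone_top S \<and> closedin stone_top S \<and> E_closed (EB B) S \<and> x \<in> S \<and> y \<notin> S"
    using openin_basic closedin_basic by blast
qed

lemma conditional_imp_top: "conditional_algebra imp \<Longrightarrow> imp a top = top"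
  unfolding conditional_algebra_def by blast

lemma conditional_imp_inf: "conditional_algebra imp \<Longrightarrow> inf (imp a b) (imp a c) = imp a (inf b c)"
  unfolding conditional_algebra_def by blast

lemma conditional_imp_mono:
  assumes "conditional_algebra imp" "b \<le> c"
  shows "imp a b \<le> imp a c"
proof -
  have "imp a b = imp a (inf b c)"
    using assms(2) by (simp add: inf_absorb1)
  also have "\<dots> = inf (imp a b) (imp a c)"
    using conditional_imp_inf[OF assms(1)] by simp
  finally show ?thesis
    by (metis inf.cobounded2)
qed

lemma conditional_imp_antimono:
  assumes "conditional_algebra imp" "a \<le> a'"
  shows "imp a' b \<le> imp a b"
proof -
  have "imp (sup a a') b \<le> inf (imp a b) (imp a' b)"
    using assms(1) unfolding conditional_algebra_def by blast
  moreover have "sup a a' = a'"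
    using assms(2) by (rule sup_absorb2)
  ultimately show ?thesis by simp
qed

lemma bfilter_Dimp:
  assumes ca: "conditional_algebra imp" and u: "u \<in> Ul" and F: "bfilter F"
  shows "bfilter (Dimp imp u F)"
  unfolding bfilter_def
proof (intro conjI ballI allI impI)
  have "imp top top \<in> u"
    using conditional_imp_top[OF ca] Ul_top[OF u] by simp
  then show "top \<in> Dimp imp u F"
    using bfilter_top[OF F] unfolding Dimp_def by blast
next
  fix b c assume "b \<in> Dimp imp u F" "b \<le> c"
  then show "c \<in> Dimp imp u F"
    using conditional_imp_mono[OF ca] Ul_upclosed[OF u] unfolding Dimp_def by blast
next
  fix b c assume "b \<in> Dimp imp u F" "c \<in> Dimp imp u F"
  then obtain f g where fg: "f \<in> F" "imp f b \<in> u" "g \<in> F" "imp g c \<in> u"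
    unfolding Dimp_def by blast
  then have "imp (inf f g) b \<in> u" "imp (inf f g) c \<in> u"
    using conditional_imp_antimono[OF ca] Ul_upclosed[OF u] by (meson inf_le1 inf_le2)+
  then have "imp (inf f g) (inf b c) \<in> u"
    using conditional_imp_inf[OF ca] Ul_inf_iff[OF u] by metis
  moreover have "inf f g \<in> F"
    using fg F unfolding bfilter_def by blast
  ultimately show "inf b c \<in> Dimp imp u F"
    unfolding Dimp_def by blast
qed

lemma Dimp_upclosure_singleton:
  assumes "conditional_algebra imp" "u \<in> Ul"
  shows "Dimp imp u (upclosure {a}) = {b. imp a b \<in> u}"
proof -
  have "imp a b \<in> u" if "a \<le> a'" "imp a' b \<in> u" for a' b
    using conditional_imp_antimono[OF assms(1) that(1)] Ul_upclosed[OF assms(2) that(2)] by blast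
  then show ?thesis
    unfolding Dimp_def upclosure_def by auto
qed

lemma TA_phiI:
  assumes "u \<in> Ul" "v \<in> Ul" "bfilter F" "Dimp imp u F \<subseteq> v"
  shows "TA imp u (phi F) v"
  unfolding TA_def using assms by (intro conjI exI[of _ F]) simp_all

lemma E_preceq_phi_upclosure_trace:
  assumes B: "boolean_subalgebra B" and F: "bfilter F"
  shows "E_preceq (EB B) (phi (upclosure (F \<inter> B))) (phi F)"
  unfolding E_preceq_def
proof
  fix z assume "z \<in> phi (upclosure (F \<inter> B))"
  then have z: "z \<in> Ul" "F \<inter> B \<subseteq> z"
    unfolding phi_def using subset_upclosure by blast+
  have "\<exists>w\<in>Ul. F \<subseteq> w \<and> w \<inter> B = z \<inter> B"
    using z(2) bfilter_upclosed[OF F] bfilter_top[OF F] bfilter_inf_closed[OF F]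
    by (intro exists_Ul_superset_same_trace[OF B z(1)]) blast+
  then show "\<exists>w\<in>phi F. (z, w) \<in> EB B"
    unfolding phi_def EB_def using z(1) by auto
qed

lemma EB_back_and_forth:
  assumes ca: "conditional_algebra imp" and B: "subalgebra_dom imp B"
    and xy: "(x, y) \<in> EB B" and T: "TA imp x Y x'"
  shows "\<exists>y' C. (x', y') \<in> EB B \<and> closedin stone_top C \<and> TA imp y C y' \<and> E_preceq (EB B) C Y"
proof -
  have Bool: "boolean_subalgebra B"
    using B by (rule boolean_subalgebra_subalgebra_dom)
  have y: "y \<in> Ul" and trace: "x \<inter> B = y \<inter> B"
    using xy unfolding EB_def by auto
  obtain F where F: "bfilter F" "Y = phi F" "Dimp imp x F \<subseteq> x'" and x': "x' \<in> Ul"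
    using T unfolding TA_def by blast
  define G where "G = upclosure (F \<inter> B)"
  have G: "bfilter G"
    unfolding G_def using F(1) Bool
    by (intro bfilter_upclosure) (auto simp: boolean_subalgebra_def inf_closed_def bfilter_def)
  have "b \<in> x'" if d: "d \<in> Dimp imp y G" and b: "b \<in> B" "d \<le> b" for d b
  proof -
    obtain g c where "imp g d \<in> y" "c \<in> F" "c \<in> B" "c \<le> g"
      using d unfolding Dimp_def G_def upclosure_def by blast
    moreover have "imp g d \<le> imp c b"
      using conditional_imp_antimono[OF ca \<open>c \<le> g\<close>] conditional_imp_mono[OF ca b(2)] by (rule order_trans)
    ultimately have "imp c b \<in> y" "imp c b \<in> B"
      using Ul_upclosed[OF y] b(1) B unfolding subalgebra_dom_def by blast+
    then have "imp c b \<in> x" using trace by blast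
    then show "b \<in> x'" using F(3) \<open>c \<in> F\<close> unfolding Dimp_def by blast
  qed
  moreover have "Dimp imp y G \<noteq> {}" "inf_closed (Dimp imp y G)"
    using bfilter_top bfilter_inf_closed bfilter_Dimp[OF ca y G] by blast+
  ultimately obtain y' where y': "y' \<in> Ul" "Dimp imp y G \<subseteq> y'" "y' \<inter> B = x' \<inter> B"
    using exists_Ul_superset_same_trace[OF Bool x', of "Dimp imp y G"] by blast
  have "(x', y') \<in> EB B" using x' y' unfolding EB_def by auto
  moreover have "TA imp y (phi G) y'"
    using y y'(1) G y'(2) by (rule TA_phiI)
  moreover have "E_preceq (EB B) (phi G) Y"
    unfolding G_def F(2) by (rule E_preceq_phi_upclosure_trace[OF Bool F(1)])
  ultimately show ?thesis using closedin_phi by blast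
qed

lemma C_equivalence_EB:
  assumes "conditional_algebra imp" "subalgebra_dom imp B"
  shows "C_equivalence imp (EB B)"
  unfolding C_equivalence_def
  using boolean_equivalence_EB EB_back_and_forth[OF assms] by blast

section \<open>Every C-equivalence comes from a subalgebra\<close>

lemma E_closed_Un: "E_closed E S \<Longrightarrow> E_closed E T \<Longrightarrow> E_closed E (S \<union> T)"
  unfolding E_closed_def by blast

lemma E_closed_Int: "E_closed E S \<Longrightarrow> E_closed E T \<Longrightarrow> E_closed E (S \<inter> T)"
  unfolding E_closed_def by blast

lemma E_closed_Diff: "sym E \<Longrightarrow> E_closed E S \<Longrightarrow> E_closed E T \<Longrightarrow> E_closed E (S - T)"
  unfolding E_closed_def sym_def by blast

lemma E_closed_empty: "E_closed E {}"
  unfolding E_closed_def by blast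

lemma E_closed_carrier: "E \<subseteq> A \<times> A \<Longrightarrow> E_closed E A"
  unfolding E_closed_def by blast

lemma E_preceq_E_closed_subset:
  assumes "sym E" "E_closed E S" "E_preceq E Y S"
  shows "Y \<subseteq> S"
  using assms unfolding sym_def E_closed_def E_preceq_def by blast

definition BE :: "('a::boolean_algebra set \<times> 'a set) set \<Rightarrow> 'a set" where
  "BE E = {a. E_closed E (basic a)}"

lemma BE_mem_iff:
  assumes "equiv Ul E" "(x, y) \<in> E" "a \<in> BE E"
  shows "a \<in> x \<longleftrightarrow> a \<in> y"
proof -
  have "(y, x) \<in> E" "x \<in> Ul" "y \<in> Ul"
    using assms(1,2) equiv_type[OF assms(1)] unfolding equiv_def sym_def by blast+
  then show ?thesis
    using assms(2,3) unfolding BE_def E_closed_def basic_def by blast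
qed

lemma BE_memI:
  assumes "equiv Ul E" "\<And>x y. (x, y) \<in> E \<Longrightarrow> a \<in> x \<Longrightarrow> a \<in> y"
  shows "a \<in> BE E"
  using assms(2) equiv_type[OF assms(1)] unfolding BE_def E_closed_def basic_def by blast

lemma EB_BE:
  assumes "boolean_equivalence E"
  shows "EB (BE E) = E"
proof -
  have eq: "equiv Ul E"
    and separating: "\<And>x y. x \<in> Ul \<Longrightarrow> y \<in> Ul \<Longrightarrow> (x, y) \<notin> E \<Longrightarrow>
      \<exists>S. openin stone_top S \<and> closedin stone_top S \<and> E_closed E S \<and> x \<in> S \<and> y \<notin> S"
    using assms unfolding boolean_equivalence_def by blast+
  show ?thesis
  proof (intro subset_antisym subrelI)
    fix x y assume "(x, y) \<in> EB (BE E)"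
    then have xy: "x \<in> Ul" "y \<in> Ul" "x \<inter> BE E = y \<inter> BE E"
      unfolding EB_def by auto
    show "(x, y) \<in> E"
    proof (rule ccontr)
      assume "(x, y) \<notin> E"
      then obtain S where S: "openin stone_top S" "closedin stone_top S" "E_closed E S" "x \<in> S" "y \<notin> S"
        using separating xy(1,2) by blast
      then obtain a where a: "S = basic a"
        using clopen_eq_basic by blast
      then have "a \<in> BE E" "a \<in> x" "a \<notin> y"
        using S(3-5) xy(2) unfolding a BE_def basic_def by auto
      then show False using xy(3) by blast
    qed
  next
    fix x y assume xy: "(x, y) \<in> E"
    then have "x \<in> Ul" "y \<in> Ul"
      using equiv_type[OF eq] by blast+
    moreover have "x \<inter> BE E = y \<inter> BE E"
      using BE_mem_iff[OF eq xy] by blast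
    ultimately show "(x, y) \<in> EB (BE E)"
      unfolding EB_def by simp
  qed
qed

lemma C_equivalence_equiv: "C_equivalence imp E \<Longrightarrow> equiv Ul E"
  unfolding C_equivalence_def boolean_equivalence_def by blast

lemma C_equivalence_back_and_forth:
  assumes "C_equivalence imp E" "(x, y) \<in> E" "closedin stone_top Y" "TA imp x Y x'"
  shows "\<exists>y' C. (x', y') \<in> E \<and> closedin stone_top C \<and> TA imp y C y' \<and> E_preceq E C Y"
  using assms unfolding C_equivalence_def by blast

lemma mem_filter_if_E_preceq_basic:
  assumes "sym E" "a \<in> BE E" "bfilter G" "E_preceq E (phi G) (basic a)"
  shows "a \<in> G"
proof (rule mem_if_phi_subset_basic[OF assms(3)])
  show "phi G \<subseteq> basic a"
    using E_preceq_E_closed_subset[OF assms(1) _ assms(4)] assms(2) unfolding BE_def by blast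
qed

lemma imp_mem_BE:
  assumes ca: "conditional_algebra imp" and CE: "C_equivalence imp E"
    and a: "a \<in> BE E" and b: "b \<in> BE E"
  shows "imp a b \<in> BE E"
proof -
  have eq: "equiv Ul E"
    using CE by (rule C_equivalence_equiv)
  then have sym: "sym E"
    unfolding equiv_def by blast
  have "imp a b \<in> y" if xy: "(x, y) \<in> E" and ab: "imp a b \<in> x" for x y
  proof (rule ccontr)
    assume "imp a b \<notin> y"
    have y: "y \<in> Ul" and yx: "(y, x) \<in> E"
      using xy sym equiv_type[OF eq] unfolding sym_def by blast+
    define A where "A = upclosure {a}"
    have A: "bfilter A"
      unfolding A_def by (rule bfilter_upclosure) (auto simp: inf_closed_def)
    have "b \<notin> Dimp imp y A"
      unfolding A_def Dimp_upclosure_singleton[OF ca y] using \<open>imp a b \<notin> y\<close> by simp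
    then obtain y' where y': "y' \<in> Ul" "Dimp imp y A \<subseteq> y'" "b \<notin> y'"
      using exists_Ul_superset_not_mem[OF bfilter_Dimp[OF ca y A]] by blast
    then have "TA imp y (phi A) y'"
      using TA_phiI[OF y _ A] by blast
    then obtain x'' C where C: "(y', x'') \<in> E" "TA imp x C x''" "E_preceq E C (phi A)"
      using C_equivalence_back_and_forth[OF CE yx closedin_phi] by blast
    then obtain G where G: "bfilter G" "C = phi G" "Dimp imp x G \<subseteq> x''"
      unfolding TA_def by blast
    have "a \<in> G"
      using mem_filter_if_E_preceq_basic[OF sym a G(1)] C(3)
      unfolding G(2) A_def phi_upclosure_singleton by blast
    then have "b \<in> x''"
      using ab G(3) unfolding Dimp_def by blast
    then show False
      using BE_mem_iff[OF eq C(1) b] y'(3) by blast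
  qed
  then show ?thesis by (rule BE_memI[OF eq])
qed

lemma subalgebra_dom_BE:
  assumes ca: "conditional_algebra imp" and CE: "C_equivalence imp E"
  shows "subalgebra_dom imp (BE E)"
proof -
  have "equiv Ul E"
    using CE by (rule C_equivalence_equiv)
  then have sym: "sym E" and Ul: "E_closed E Ul"
    unfolding equiv_def by (auto intro: E_closed_carrier)
  show ?thesis
    unfolding subalgebra_dom_def
  proof (intro conjI ballI)
    show "top \<in> BE E" "bot \<in> BE E"
      unfolding BE_def by (simp_all add: basic_top basic_bot Ul E_closed_empty)
  next
    fix c d assume c: "c \<in> BE E" and d: "d \<in> BE E"
    then show "sup c d \<in> BE E" "inf c d \<in> BE E"
      unfolding BE_def by (simp_all add: basic_sup basic_inf E_closed_Un E_closed_Int)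
    show "imp c d \<in> BE E"
      using ca CE c d by (rule imp_mem_BE)
  next
    fix c assume "c \<in> BE E"
    then show "- c \<in> BE E"
      unfolding BE_def by (simp add: basic_compl[symmetric] E_closed_Diff sym Ul)
  qed
qed

theorem theorem7p6:
  fixes imp :: "'a::boolean_algebra \<Rightarrow> 'a \<Rightarrow> 'a"
  assumes "conditional_algebra imp"
  shows "bij_betw EB {B. subalgebra_dom imp B} {E. C_equivalence imp E}
       \<and> (\<forall>B1 B2. subalgebra_dom imp B1 \<longrightarrow> subalgebra_dom imp B2 \<longrightarrow>
              (B1 \<subseteq> B2 \<longleftrightarrow> EB B2 \<subseteq> EB B1))"
proof -
  have order: "B1 \<subseteq> B2 \<longleftrightarrow> EB B2 \<subseteq> EB B1" if "subalgebra_dom imp B2" for B1 B2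
    using EB_subset_iff[OF boolean_subalgebra_subalgebra_dom[OF that]] by blast
  have "inj_on EB {B. subalgebra_dom imp B}"
  proof (rule inj_onI)
    fix B1 B2 assume "B1 \<in> {B. subalgebra_dom imp B}" "B2 \<in> {B. subalgebra_dom imp B}" "EB B1 = EB B2"
    then show "B1 = B2"
      using order[of B2 B1] order[of B1 B2] by (simp add: subset_antisym)
  qed
  moreover have "EB ` {B. subalgebra_dom imp B} = {E. C_equivalence imp E}"
  proof
    show "EB ` {B. subalgebra_dom imp B} \<subseteq> {E. C_equivalence imp E}"
      using C_equivalence_EB[OF assms] by blast
    show "{E. C_equivalence imp E} \<subseteq> EB ` {B. subalgebra_dom imp B}"
    proof
      fix E assume "E \<in> {E. C_equivalence imp E}"
      then have "EB (BE E) = E" "subalgebra_dom imp (BE E)"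
        using EB_BE subalgebra_dom_BE[OF assms] unfolding C_equivalence_def by auto
      then show "E \<in> EB ` {B. subalgebra_dom imp B}" by (metis imageI mem_Collect_eq)
    qed
  qed
  ultimately show ?thesis
    using order unfolding bij_betw_def by blast
qed

end
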